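(* Let $\mathcal{G}=(\mathcal{V},\mathcal{E},\rho)$ be a rooted weighted directed graph with nonnegative edge weights $w_{ij}$, let $L$ be either (a) the Laplacian of $\mathcal{G}$, with $\mathcal{D}$ the set of all trees, or (b) the root-weighted Laplacian of $\mathcal{G}$, with $\mathcal{D}$ the set of single-rooted trees, so that $Z=\det L=\sum_{d\in\mathcal{D}}w(d)$; assume $Z>0$. Let $B=L^{-\top}$ and, for each edge $(i\to j)\in\mathcal{E}$ and indices $i',j'\in\{1,\dots,N\}$, let $L'^{\,ij}_{i'j'}=\partial L_{i'j'}/\partial w_{ij}$ (a constant). Let $r_{ij}\in\mathbb{R}^R$ and $s_{ij}\in\mathbb{R}^S$ be given vectors for each edge, and set $r(d)=\sum_{(i\to j)\in d}r_{ij}$, $s(d)=\sum_{(i\to j)\in d}s_{ij}$, $\bar{t}=\sum_{d\in\mathcal{D}}w(d)\,r(d)s(d)^\top$, $\bar{r}=\sum_{d\in\mathcal{D}}w(d)r(d)$, $\bar{s}=\sum_{d\in\mathcal{D}}w(d)s(d)$, $\bar{f}=\sum_{(i\to j)\in\mathcal{E}}\bar{w}_{ij}\,r_{ij}s_{ij}^\top$, and for $j',l'\in\{1,\dots,N\}$ $$\hat{r}_{j'l'}=\sum_{(k\to l)\in\mathcal{E}}\sum_{k'=1}^{N}B_{k'j'}\,L'^{\,kl}_{k'l'}\,w_{kl}\,r_{kl},\qquad \hat{s}_{j'l'}=\sum_{(i\to j)\in\mathcal{E}}\sum_{i'=1}^{N}B_{i'l'}\,L'^{\,ij}_{i'j'}\,w_{ij}\,s_{ij}.$$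 Then $$\bar{t}=\bar{f}+\frac{1}{Z}\,\bar{r}\,\bar{s}^\top-Z\sum_{j',l'=1}^{N}\hat{r}_{j'l'}\,\hat{s}_{j'l'}^\top.$$
   Context: A rooted weighted directed graph $\mathcal{G}=(\mathcal{V},\mathcal{E},\rho)$ has node set $\mathcal{V}=\{1,\dots,N\}\cup\{\rho\}$ with designated root $\rho$; $\mathcal{E}$ is a set of edges $(i\to j)$ between distinct nodes, at most one edge per ordered pair, with weight $w_{ij}$ (set $w_{ij}=0$ if there is no edge); the root has no incoming edges. A tree $d$ is a set of $N$ edges with no cycle such that every non-root node has exactly one incoming edge and $\rho$ has at least one outgoing edge; it is single-rooted if $\rho$ has exactly one outgoing edge in $d$. $w(d)=\prod_{(i\to j)\in d}w_{ij}$ and $\bar{w}_{ij}=\sum_{d\in\mathcal{D}:(i\to j)\in d}w(d)$. The Laplacian $L\in\mathbb{R}^{N\times N}$ (indices $i,j\in\{1,\dots,N\}$) has $L_{jj}=\sum_{i'\in\mathcal{V}\setminus\{j\}}w_{i'j}$ and $L_{ij}=-w_{ij}$ for $i\neq j$. The root-weighted Laplacian $\hat{L}\in\mathbb{R}^{N\times N}$ has $\hat{L}_{1j}=w_{\rho j}$ (first row), and for $i\neq 1$: $\hat{L}_{jj}=\sum_{i'\in\mathcal{V}\setminus\{\rho,j\}}w_{i'j}$, $\hat{L}_{ij}=-w_{ij}$ for $i\neq j$. In case (a), $\det L$ equals the sum of $w(d)$ over all trees; in case (b), $\det\hat{L}$ equals the sum of $w(d)$ over all single-rooted trees. *)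

theory Defs
  imports "HOL-Analysis.Analysis"
begin

text \<open>Nodes of the rooted graph: the non-root nodes 1..N are the elements of a finite
type 'n (so N = CARD('n)); the root \<rho> is None, node k is Some k.
Weights are given as a function w on ordered pairs of nodes (w i j = 0 if there is no edge).\<close>

type_synonym 'n node = "'n option"

definition root :: "'n node" where "root = None"

definition rooted_wdigraph ::
  "('n node \<times> 'n node) set \<Rightarrow> ('n node \<Rightarrow> 'n node \<Rightarrow> real) \<Rightarrow> bool" where
  "rooted_wdigraph E w \<longleftrightarrow>
     (\<forall>(i,j)\<in>E. i \<noteq> j \<and> j \<noteq> root) \<and>
     (\<forall>i j. (i,j) \<notin> E \<longrightarrow> w i j = 0) \<and>
     (\<forall>i j. w i j \<ge> 0)"

definition is_tree :: "('n::finite node \<times> 'n node) set \<Rightarrow> ('n node \<times> 'n node) set \<Rightarrow> bool" where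
  "is_tree E d \<longleftrightarrow> d \<subseteq> E \<and> card d = CARD('n) \<and> acyclic d \<and>
     (\<forall>j::'n. card {i. (i, Some j) \<in> d} = 1) \<and> (\<exists>j. (root, j) \<in> d)"

definition single_rooted :: "('n node \<times> 'n node) set \<Rightarrow> bool" where
  "single_rooted d \<longleftrightarrow> card {j. (root, j) \<in> d} = 1"

datatype lap_case = AllTrees | SingleRooted

definition trees :: "lap_case \<Rightarrow> ('n::finite node \<times> 'n node) set \<Rightarrow> ('n node \<times> 'n node) set set" where
  "trees c E = {d. is_tree E d \<and> (c = SingleRooted \<longrightarrow> single_rooted d)}"

text \<open>Laplacian (case a).  Row index = source, column index = target.\<close>
definition laplacian :: "('n::finite node \<Rightarrow> 'n node \<Rightarrow> real) \<Rightarrow> real^'n^'n" where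
  "laplacian w = (\<chi> i j. if i = j then (\<Sum>i'\<in>UNIV - {Some j}. w i' (Some j))
                         else - w (Some i) (Some j))"

text \<open>Root-weighted Laplacian (case b); the parameter one is the node labelled 1,
whose row is replaced by the root weights.\<close>
definition root_laplacian :: "'n::finite \<Rightarrow> ('n node \<Rightarrow> 'n node \<Rightarrow> real) \<Rightarrow> real^'n^'n" where
  "root_laplacian one w = (\<chi> i j. if i = one then w root (Some j)
       else if i = j then (\<Sum>i'\<in>UNIV - {root, Some j}. w i' (Some j))
       else - w (Some i) (Some j))"

definition lap :: "lap_case \<Rightarrow> 'n::finite \<Rightarrow> ('n node \<Rightarrow> 'n node \<Rightarrow> real) \<Rightarrow> real^'n^'n" where
  "lap c one w = (case c of AllTrees \<Rightarrow> laplacian w | SingleRooted \<Rightarrow> root_laplacian one w)"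

definition upd_w :: "('a \<Rightarrow> 'a \<Rightarrow> real) \<Rightarrow> 'a \<Rightarrow> 'a \<Rightarrow> real \<Rightarrow> 'a \<Rightarrow> 'a \<Rightarrow> real" where
  "upd_w w k l x = (\<lambda>a b. if a = k \<and> b = l then x else w a b)"

definition lap_deriv :: "lap_case \<Rightarrow> 'n::finite \<Rightarrow> ('n node \<Rightarrow> 'n node \<Rightarrow> real)
     \<Rightarrow> 'n node \<Rightarrow> 'n node \<Rightarrow> 'n \<Rightarrow> 'n \<Rightarrow> real" where
  "lap_deriv c one w k l k' l' = deriv (\<lambda>x. lap c one (upd_w w k l x) $ k' $ l') (w k l)"

definition tree_weight :: "('a \<Rightarrow> 'a \<Rightarrow> real) \<Rightarrow> ('a \<times> 'a) set \<Rightarrow> real" where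
  "tree_weight w d = (\<Prod>(i,j)\<in>d. w i j)"

definition edge_bar :: "('a \<times> 'a) set set \<Rightarrow> ('a \<Rightarrow> 'a \<Rightarrow> real) \<Rightarrow> 'a \<Rightarrow> 'a \<Rightarrow> real" where
  "edge_bar D w i j = (\<Sum>d\<in>{d\<in>D. (i,j) \<in> d}. tree_weight w d)"

definition tree_sum :: "('a \<Rightarrow> 'a \<Rightarrow> 'v::comm_monoid_add) \<Rightarrow> ('a \<times> 'a) set \<Rightarrow> 'v" where
  "tree_sum r d = (\<Sum>(i,j)\<in>d. r i j)"

definition outer :: "real^'r \<Rightarrow> real^'s \<Rightarrow> real^'s^'r" where
  "outer x y = (\<chi> a b. x $ a * y $ b)"

end

(*
  Encode a tree by its parent map f, where f j is the tail of the tree edge entering j.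
  Column j of L is linear in the weights of the edges entering j, so multilinearity of the
  determinant gives det L = sum over all maps f of prod_j w (f j) j * det U_f, where the
  rows of U_f are single-edge columns; det U_f is 1 if f is the parent map of an admissible
  tree and 0 otherwise.  This is the matrix-tree theorem.

  Multiplying the weights of the edges entering j by g multiplies w(d) by g (f_d j) and
  changes only column j of L, so Cramer's rule gives sum_d w(d) g (f_d j) = Z x_j, with
  x = L^-1 (new column j).  Scaling at two nodes j <> j' gives the 2x2 minor
  sum_d w(d) g (f_d j) h (f_d j') = Z (x_j y_j' - x_j' y_j).  Expanding t-bar over pairs of
  nodes, the pairs j = j' give f-bar, and the minors, which vanish for j = j', add up to
  r-bar s-bar^T / Z - Z sum r-hat s-hat^T: since dL/dw_kl is the column of the edge k -> l,
  the vectors r-hat and s-hat are exactly these solutions x and y.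
*)

theory Submission
  imports Defs
begin

lemma det_eq_sum_permutations_subset:
  fixes A :: "'a::comm_ring_1^'n::finite^'n"
  assumes "Q \<subseteq> {p. p permutes UNIV}"
    and "\<And>p. p permutes UNIV \<Longrightarrow> p \<notin> Q \<Longrightarrow> (\<Prod>i\<in>UNIV. A $ i $ p i) = 0"
  shows "det A = (\<Sum>p\<in>Q. of_int (sign p) * (\<Prod>i\<in>UNIV. A $ i $ p i))"
  unfolding det_def using assms
  by (intro sum.mono_neutral_right) (auto simp: finite_permutations)

lemma det_eq_0_if_kernel:
  fixes A :: "real^'n::finite^'n"
  assumes "A *v x = 0" and "x \<noteq> 0"
  shows "det A = 0"
  using assms inj_matrix_vector_mult[of A] invertible_det_nz[of A]
  by (metis injD matrix_vector_mult_0_right)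

lemma det_rows_sum_expand:
  fixes a :: "'n::finite \<Rightarrow> 'b::finite \<Rightarrow> 'a::comm_ring_1^'n"
  shows "det (\<chi> i. \<Sum>b\<in>UNIV. a i b) = (\<Sum>f\<in>UNIV. det (\<chi> i. a i (f i)))"
proof -
  have "det (\<chi> i. \<Sum>b\<in>UNIV. a i b)
      = (\<Sum>p\<in>{p. p permutes UNIV}. of_int (sign p) * (\<Prod>i\<in>UNIV. \<Sum>b\<in>UNIV. a i b $ p i))"
    by (simp add: det_def)
  also have "\<dots> = (\<Sum>p\<in>{p. p permutes UNIV}. \<Sum>f\<in>UNIV. of_int (sign p) * (\<Prod>i\<in>UNIV. a i (f i) $ p i))"
    by (simp add: prod_sum_PiE sum_distrib_left)
  also have "\<dots> = (\<Sum>f\<in>UNIV. det (\<chi> i. a i (f i)))"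
    by (subst sum.swap) (simp add: det_def)
  finally show ?thesis .
qed

lemma det_replace_column:
  fixes A A' :: "'a::field^'n::finite^'n"
  assumes "\<And>i k. k \<noteq> j \<Longrightarrow> A' $ i $ k = A $ i $ k" and "A *v x = column j A'"
  shows "det A' = x $ j * det A"
proof -
  have "A' $ i $ k = (if k = j then (A *v x) $ i else A $ i $ k)" for i k
    using assms by (simp add: column_def)
  then have "A' = (\<chi> i k. if k = j then (A *v x) $ i else A $ i $ k)"
    by (simp add: vec_eq_iff)
  then show ?thesis
    by (simp add: cramer_lemma)
qed

lemma det_two_rows_axis:
  fixes x y :: "'a::comm_ring_1^'n::finite"
  assumes "j \<noteq> j'"
  shows "det (\<chi> k. if k = j then x else if k = j' then y else axis k 1) = x $ j * y $ j' - x $ j' * y $ j"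
proof -
  let ?P = "(\<chi> k. if k = j then x else if k = j' then y else axis k 1) :: 'a^'n^'n"
  let ?swap = "Transposition.transpose j j'"
  have prod_pair: "(\<Prod>k\<in>UNIV. h k) = h j * h j'" if "\<And>k. k \<noteq> j \<Longrightarrow> k \<noteq> j' \<Longrightarrow> h k = 1"
    for h :: "'n \<Rightarrow> 'a"
  proof -
    have "(\<Prod>k\<in>UNIV. h k) = (\<Prod>k\<in>{j, j'}. h k)"
      using that by (intro prod.mono_neutral_right) auto
    then show ?thesis
      using assms by simp
  qed
  have vanish: "(\<Prod>k\<in>UNIV. ?P $ k $ p k) = 0"
    if perm: "p permutes UNIV" and not_id_swap: "p \<notin> {id, ?swap}" for p
  proof -
    have "\<not> p permutes {j, j'}"
      using not_id_swap by (simp add: permutes_doubleton_iff)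
    then obtain k where "k \<noteq> j" "k \<noteq> j'" "p k \<noteq> k"
      using permutes_superset[OF perm, of "{j, j'}"] by blast
    then have "?P $ k $ p k = 0"
      by (simp add: axis_def)
    then show ?thesis
      by (intro prod_zero) (simp, blast)
  qed
  have "det ?P = (\<Sum>p\<in>{id, ?swap}. of_int (sign p) * (\<Prod>k\<in>UNIV. ?P $ k $ p k))"
    by (rule det_eq_sum_permutations_subset[OF _ vanish]) (simp_all add: permutes_id permutes_swap_id)
  also have "\<dots> = (\<Prod>k\<in>UNIV. ?P $ k $ k) - (\<Prod>k\<in>UNIV. ?P $ k $ ?swap k)"
  proof -
    have "id \<noteq> ?swap"
      using assms by (metis id_apply transpose_apply_first)
    then show ?thesis
      using assms by (simp add: sign_swap_id)
  qed
  also have "\<dots> = x $ j * y $ j' - x $ j' * y $ j"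
    using assms by (simp add: prod_pair axis_def)
  finally show ?thesis .
qed

lemma det_replace_two_columns:
  fixes A A' :: "'a::comm_ring_1^'n::finite^'n"
  assumes "j \<noteq> j'" and same: "\<And>i k. k \<noteq> j \<Longrightarrow> k \<noteq> j' \<Longrightarrow> A' $ i $ k = A $ i $ k"
    and "A *v x = column j A'" and "A *v y = column j' A'"
  shows "det A' = (x $ j * y $ j' - x $ j' * y $ j) * det A"
proof -
  let ?P = "(\<chi> k. if k = j then x else if k = j' then y else axis k 1) :: 'a^'n^'n"
  have "(A ** transpose ?P) $ i $ k = A' $ i $ k" for i k
  proof -
    have "(A ** transpose ?P) $ i $ k = (A *v ?P $ k) $ i"
      by (simp add: matrix_matrix_mult_def matrix_vector_mult_def transpose_def)
    also have "\<dots> = A' $ i $ k"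
    proof -
      consider "k = j" | "k = j'" | "k \<noteq> j" "k \<noteq> j'"
        by blast
      then show ?thesis
      proof cases
        case 3
        then have "(A *v ?P $ k) $ i = (\<Sum>m\<in>UNIV. if m = k then A $ i $ m else 0)"
          by (simp add: matrix_vector_mult_def axis_def if_distrib[of "\<lambda>t. _ * t"] cong: if_cong)
        then show ?thesis
          using 3 same by simp
      qed (use assms in \<open>simp_all add: column_def\<close>)
    qed
    finally show ?thesis .
  qed
  then have "A' = A ** transpose ?P"
    by (simp add: vec_eq_iff)
  then show ?thesis
    using det_two_rows_axis[OF \<open>j \<noteq> j'\<close>, of x y] by (simp add: det_mul mult.commute)
qed

lemma matrix_inv_left:
  fixes A :: "'a::semiring_1^'n^'m"
  assumes "invertible A"
  shows "matrix_inv A ** A = mat 1"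
  using someI_ex[OF assms[unfolded invertible_def]] by (simp add: matrix_inv_def)

section \<open>Trees as parent maps\<close>

inductive reaches_root :: "('n \<Rightarrow> 'n node) \<Rightarrow> 'n \<Rightarrow> bool" for f where
  at_root: "f j = root \<Longrightarrow> reaches_root f j"
| via_parent: "f j = Some i \<Longrightarrow> reaches_root f i \<Longrightarrow> reaches_root f j"

definition parent_graph :: "('n \<Rightarrow> 'n node) \<Rightarrow> ('n node \<times> 'n node) set" where
  "parent_graph f = range (\<lambda>j. (f j, Some j))"

lemma in_parent_graph_iff: "(i, Some j) \<in> parent_graph f \<longleftrightarrow> i = f j"
  by (auto simp: parent_graph_def)

lemma wf_parent_graph_iff: "wf (parent_graph f) \<longleftrightarrow> (\<forall>j. reaches_root f j)"
  for f :: "'n \<Rightarrow> 'n node"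
proof
  assume wf: "wf (parent_graph f)"
  have "\<forall>j. x = Some j \<longrightarrow> reaches_root f j" for x
    using wf
  proof (induction x rule: wf_induct_rule)
    case (less x)
    show ?case
    proof (intro allI impI)
      fix j assume "x = Some j"
      then have "(f j, x) \<in> parent_graph f" by (simp add: in_parent_graph_iff)
      then show "reaches_root f j"
        using less by (cases "f j") (auto simp: root_def intro: reaches_root.intros)
    qed
  qed
  then show "\<forall>j. reaches_root f j" by blast
next
  assume all: "\<forall>j. reaches_root f j"
  show "wf (parent_graph f)"
  proof (rule wfUNIVI)
    fix P :: "'n node \<Rightarrow> bool" and x
    assume step: "\<forall>x. (\<forall>y. (y, x) \<in> parent_graph f \<longrightarrow> P y) \<longrightarrow> P x"
    have P_root: "P root"
      using step by (auto simp: parent_graph_def root_def)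
    have "P (Some j)" if "reaches_root f j" for j
      using that
    proof (induction j rule: reaches_root.induct)
      case (at_root j)
      then show ?case using step P_root by (metis in_parent_graph_iff)
    next
      case (via_parent j i)
      then show ?case using step by (metis in_parent_graph_iff)
    qed
    then show "P x" using all P_root by (cases x) (auto simp: root_def)
  qed
qed

lemma acyclic_parent_graph_iff:
  "acyclic (parent_graph (f :: 'n::finite \<Rightarrow> 'n node)) \<longleftrightarrow> (\<forall>j. reaches_root f j)"
  using finite_acyclic_wf wf_acyclic wf_parent_graph_iff by (metis finite)

lemma reaches_root_not_self_parent: "reaches_root f j \<Longrightarrow> f j \<noteq> Some j"
  by (induction rule: reaches_root.induct) (auto simp: root_def)

lemma reaches_root_ex_root_child: "reaches_root f j \<Longrightarrow> \<exists>i. f i = root"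
  by (induction rule: reaches_root.induct) auto

definition tree_parents :: "lap_case \<Rightarrow> ('n::finite \<Rightarrow> 'n node) set" where
  "tree_parents c = {f. (\<forall>j. reaches_root f j) \<and> (c = SingleRooted \<longrightarrow> card {j. f j = root} = 1)}"

lemma inj_parent_graph: "inj parent_graph"
  by (rule injI) (metis ext in_parent_graph_iff)

lemma card_parent_graph: "card (parent_graph (f :: 'n::finite \<Rightarrow> 'n node)) = CARD('n)"
  unfolding parent_graph_def by (rule card_image) (auto intro: inj_onI)

lemma root_children_parent_graph: "{j. (root, j) \<in> parent_graph f} = Some ` {j. f j = root}"
  by (auto simp: parent_graph_def root_def image_iff)

lemma is_tree_parent_graph_iff:
  "is_tree E (parent_graph f) \<longleftrightarrow> (\<forall>j. reaches_root f j) \<and> (\<forall>j. (f j, Some j) \<in> E)"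
proof -
  have "{i. (i, Some j) \<in> parent_graph f} = {f j}" for j
    by (auto simp: in_parent_graph_iff)
  moreover have "(\<exists>j. (root, j) \<in> parent_graph f) \<longleftrightarrow> (\<exists>j. f j = root)"
    using root_children_parent_graph[of f] by blast
  moreover have "parent_graph f \<subseteq> E \<longleftrightarrow> (\<forall>j. (f j, Some j) \<in> E)"
    by (auto simp: parent_graph_def)
  moreover have "(\<forall>j. reaches_root f j) \<Longrightarrow> \<exists>j. f j = root"
    by (metis reaches_root_ex_root_child)
  ultimately show ?thesis
    by (auto simp: is_tree_def card_parent_graph acyclic_parent_graph_iff)
qed

lemma tree_eq_parent_graph:
  assumes "is_tree E d" and "\<forall>(i, j)\<in>E. j \<noteq> root"
  obtains f where "d = parent_graph f"
proof
  define f where "f j = (THE i. (i, Some j) \<in> d)" for j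
  have parent: "(i, Some j) \<in> d \<longleftrightarrow> i = f j" for i j
  proof -
    have "card {i. (i, Some j) \<in> d} = 1"
      using assms(1) by (simp add: is_tree_def)
    then obtain p where "{i. (i, Some j) \<in> d} = {p}"
      by (rule card_1_singletonE)
    then have "(i, Some j) \<in> d \<longleftrightarrow> i = p" for i
      by blast
    then show ?thesis by (simp add: f_def)
  qed
  have "b \<noteq> root" if "(a, b) \<in> d" for a b
    using that assms by (auto simp: is_tree_def)
  then have "(a, b) \<in> d \<longleftrightarrow> (a, b) \<in> parent_graph f" for a b
    using parent by (cases b) (auto simp: in_parent_graph_iff parent_graph_def root_def)
  then show "d = parent_graph f"
    by auto
qed

lemma bij_betw_parent_graph_trees:
  assumes "\<forall>(i, j)\<in>E. j \<noteq> root"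
  shows "bij_betw parent_graph {f \<in> tree_parents c. \<forall>j. (f j, Some j) \<in> E} (trees c E)"
proof (rule bij_betw_imageI)
  show "inj_on parent_graph {f \<in> tree_parents c. \<forall>j. (f j, Some j) \<in> E}"
    using inj_parent_graph by (rule inj_on_subset) simp
  have single_rooted: "single_rooted (parent_graph f) \<longleftrightarrow> card {j. f j = root} = 1" for f
    by (simp add: single_rooted_def root_children_parent_graph card_image)
  show "parent_graph ` {f \<in> tree_parents c. \<forall>j. (f j, Some j) \<in> E} = trees c E"
  proof (intro equalityI subsetI)
    fix d assume "d \<in> trees c E"
    then obtain f where "d = parent_graph f"
      using tree_eq_parent_graph assms by (auto simp: trees_def)
    then show "d \<in> parent_graph ` {f \<in> tree_parents c. \<forall>j. (f j, Some j) \<in> E}"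
      using \<open>d \<in> trees c E\<close>
      by (auto simp: trees_def tree_parents_def is_tree_parent_graph_iff single_rooted)
  qed (auto simp: trees_def tree_parents_def is_tree_parent_graph_iff single_rooted)
qed

definition parent_weight :: "('n node \<Rightarrow> 'n node \<Rightarrow> real) \<Rightarrow> ('n::finite \<Rightarrow> 'n node) \<Rightarrow> real" where
  "parent_weight w f = (\<Prod>j\<in>UNIV. w (f j) (Some j))"

lemma tree_weight_parent_graph: "tree_weight w (parent_graph f) = parent_weight w f"
  unfolding tree_weight_def parent_graph_def parent_weight_def
  by (simp add: prod.reindex inj_on_def)

lemma tree_sum_parent_graph: "tree_sum g (parent_graph f) = (\<Sum>j\<in>UNIV. g (f j) (Some j))"
  unfolding tree_sum_def parent_graph_def
  by (simp add: sum.reindex inj_on_def)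

lemma sum_trees_eq_sum_tree_parents:
  fixes X :: "('n::finite node \<times> 'n node) set \<Rightarrow> real"
  assumes "rooted_wdigraph E w"
  shows "(\<Sum>d\<in>trees c E. tree_weight w d * X d)
    = (\<Sum>f\<in>tree_parents c. parent_weight w f * X (parent_graph f))"
proof -
  let ?F = "{f \<in> tree_parents c. \<forall>j. (f j, Some j) \<in> E}"
  have "bij_betw parent_graph ?F (trees c E)"
    using assms by (intro bij_betw_parent_graph_trees) (auto simp: rooted_wdigraph_def)
  then have "(\<Sum>d\<in>trees c E. tree_weight w d * X d) = (\<Sum>f\<in>?F. parent_weight w f * X (parent_graph f))"
    using sum.reindex_bij_betw[of parent_graph ?F "trees c E" "\<lambda>d. tree_weight w d * X d"]
    by (simp add: tree_weight_parent_graph)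
  also have "\<dots> = (\<Sum>f\<in>tree_parents c. parent_weight w f * X (parent_graph f))"
  proof (rule sum.mono_neutral_left)
    show "\<forall>f\<in>tree_parents c - ?F. parent_weight w f * X (parent_graph f) = 0"
    proof
      fix f assume "f \<in> tree_parents c - ?F"
      then obtain j where "(f j, Some j) \<notin> E"
        by blast
      then have "w (f j) (Some j) = 0"
        using assms by (simp add: rooted_wdigraph_def)
      then show "parent_weight w f * X (parent_graph f) = 0"
        unfolding parent_weight_def by (simp add: prod_zero) blast
    qed
  qed auto
  finally show ?thesis .
qed

lemma sum_edge_bar:
  fixes g :: "'a \<Rightarrow> 'a \<Rightarrow> 'v::real_vector"
  assumes "finite E" and "finite D" and "\<forall>d\<in>D. d \<subseteq> E"
  shows "(\<Sum>(i, j)\<in>E. edge_bar D w i j *\<^sub>R g i j) = (\<Sum>d\<in>D. tree_weight w d *\<^sub>R tree_sum g d)"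
proof -
  have "(\<Sum>(i, j)\<in>E. edge_bar D w i j *\<^sub>R g i j)
      = (\<Sum>e\<in>E. \<Sum>d\<in>{d. d \<in> D \<and> e \<in> d}. tree_weight w d *\<^sub>R g (fst e) (snd e))"
    by (simp add: edge_bar_def case_prod_beta scaleR_sum_left)
  also have "\<dots> = (\<Sum>d\<in>D. \<Sum>e\<in>{e. e \<in> E \<and> e \<in> d}. tree_weight w d *\<^sub>R g (fst e) (snd e))"
    using assms(1,2) by (rule sum.swap_restrict)
  also have "\<dots> = (\<Sum>d\<in>D. tree_weight w d *\<^sub>R tree_sum g d)"
  proof (intro sum.cong refl)
    fix d assume "d \<in> D"
    then have "{e. e \<in> E \<and> e \<in> d} = d"
      using assms(3) by blast
    then show "(\<Sum>e\<in>{e. e \<in> E \<and> e \<in> d}. tree_weight w d *\<^sub>R g (fst e) (snd e))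
        = tree_weight w d *\<^sub>R tree_sum g d"
      by (simp add: tree_sum_def case_prod_beta scaleR_sum_right)
  qed
  finally show ?thesis .
qed

lemma sum_edges_eq_sum_nonroot_targets:
  fixes G :: "'n::finite node \<Rightarrow> 'n node \<Rightarrow> 'v::comm_monoid_add"
  assumes "rooted_wdigraph E w" and "\<And>a b. w a b = 0 \<Longrightarrow> G a b = 0"
  shows "(\<Sum>(a, b)\<in>E. G a b) = (\<Sum>a\<in>UNIV. \<Sum>k\<in>UNIV. G a (Some k))"
proof -
  have G0: "G a b = 0" if "(a, b) \<notin> E" for a b
    using assms that by (simp add: rooted_wdigraph_def)
  have no_root: "(a, root) \<notin> E" for a
    using assms(1) by (auto simp: rooted_wdigraph_def)
  have "(\<Sum>(a, b)\<in>E. G a b) = (\<Sum>(a, b)\<in>UNIV. G a b)"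
    by (rule sum.mono_neutral_left) (auto simp: G0)
  also have "\<dots> = (\<Sum>a\<in>UNIV. \<Sum>b\<in>UNIV. G a b)"
    by (simp add: sum.cartesian_product)
  also have "\<dots> = (\<Sum>a\<in>UNIV. \<Sum>k\<in>UNIV. G a (Some k))"
    using G0[OF no_root] by (simp add: UNIV_option_conv sum.reindex root_def)
  finally show ?thesis .
qed

section \<open>The matrix-tree theorem\<close>

text \<open>The contribution of an edge \<open>a \<rightarrow> j\<close> to column \<open>j\<close> of the two Laplacians,
  see \<open>lap_eq_sum_edge_columns\<close>.\<close>

definition laplacian_edge_column :: "'n::finite node \<Rightarrow> 'n \<Rightarrow> real^'n" where
  "laplacian_edge_column a j = (\<chi> i. (if i = j then 1 else 0) - (if a = Some i then 1 else 0))"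

definition root_laplacian_edge_column :: "'n::finite \<Rightarrow> 'n node \<Rightarrow> 'n \<Rightarrow> real^'n" where
  "root_laplacian_edge_column one a j = (\<chi> i. if i = one then (if a = root then 1 else 0)
     else (if i = j \<and> a \<noteq> root then 1 else 0) - (if a = Some i then 1 else 0))"

lemma permutation_along_parents_fixes:
  assumes "inj p" and along: "\<And>i. p i = i \<or> f i = Some (p i)"
  shows "reaches_root f j \<Longrightarrow> p j = j"
proof (induction rule: reaches_root.induct)
  case (at_root j)
  then show ?case using along[of j] by (simp add: root_def)
next
  case (via_parent j i)
  show ?case
  proof (rule ccontr)
    assume "p j \<noteq> j"
    then have "p j = i"
      using along[of j] via_parent.hyps(1) by simp
    then have "p j = p i"
      using via_parent.IH by simp
    then show False
      using \<open>inj p\<close> \<open>p j \<noteq> j\<close> \<open>p j = i\<close> by (metis injD)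
  qed
qed

lemma det_laplacian_edge_columns:
  fixes f :: "'n::finite \<Rightarrow> 'n node"
  shows "det (\<chi> j. laplacian_edge_column (f j) j) = of_bool (\<forall>j. reaches_root f j)"
proof (cases "\<forall>j. reaches_root f j")
  case True
  let ?A = "(\<chi> j. laplacian_edge_column (f j) j) :: real^'n^'n"
  \<comment> \<open>A permutation avoiding the zero entries maps each node to itself or to its parent,
    and the latter is impossible when every node reaches the root.\<close>
  have "(\<Prod>i\<in>UNIV. ?A $ i $ p i) = 0" if perm: "p permutes UNIV" and "p \<notin> {id}" for p
  proof -
    have "\<not> (\<forall>i. p i = i \<or> f i = Some (p i))"
    proof
      assume "\<forall>i. p i = i \<or> f i = Some (p i)"
      then have "p j = j" for j
        using permutation_along_parents_fixes[OF permutes_inj[OF perm]] True by blast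
      then show False
        using \<open>p \<notin> {id}\<close> by (simp add: fun_eq_iff)
    qed
    then obtain i where "p i \<noteq> i" and "f i \<noteq> Some (p i)"
      by blast
    then have "?A $ i $ p i = 0"
      by (simp add: laplacian_edge_column_def)
    then show ?thesis
      by (intro prod_zero) (simp, blast)
  qed
  then have "det ?A = (\<Prod>i\<in>UNIV. ?A $ i $ i)"
    by (subst det_eq_sum_permutations_subset[of "{id}"]) (auto simp: permutes_id)
  also have "\<dots> = 1"
    using True reaches_root_not_self_parent[of f] by (simp add: laplacian_edge_column_def)
  finally show ?thesis using True by simp
next
  case False
  \<comment> \<open>The indicator of the nodes that never reach the root lies in the kernel.\<close>
  define x :: "real^'n" where "x = (\<chi> i. if reaches_root f i then 0 else 1)"
  have "(\<Sum>i\<in>UNIV. laplacian_edge_column (f j) j $ i * x $ i) = 0" for j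
  proof -
    have "(\<Sum>i\<in>UNIV. laplacian_edge_column (f j) j $ i * x $ i)
        = (\<Sum>i\<in>UNIV. if i = j then x $ i else 0) - (\<Sum>i\<in>UNIV. if f j = Some i then x $ i else 0)"
      unfolding sum_subtractf[symmetric]
      by (intro sum.cong) (auto simp: laplacian_edge_column_def)
    also have "\<dots> = 0"
      using reaches_root.simps[of f j] by (cases "f j") (auto simp: x_def root_def)
    finally show ?thesis .
  qed
  then have "(\<chi> j. laplacian_edge_column (f j) j) *v x = 0"
    by (simp add: vec_eq_iff matrix_vector_mult_def)
  moreover have "x \<noteq> 0"
    using False by (auto simp: x_def vec_eq_iff)
  ultimately have "det (\<chi> j. laplacian_edge_column (f j) j) = 0"
    by (rule det_eq_0_if_kernel)
  then show ?thesis
    using False by simp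
qed

lemma det_root_laplacian_edge_columns_single_root:
  fixes f :: "'n::finite \<Rightarrow> 'n node"
  assumes root_child: "{j. f j = root} = {r}"
  shows "det (\<chi> j. root_laplacian_edge_column one (f j) j) = det (\<chi> j. laplacian_edge_column (f j) j)"
proof -
  let ?A = "(\<chi> j. laplacian_edge_column (f j) j) :: real^'n^'n"
  let ?B = "(\<chi> j. root_laplacian_edge_column one (f j) j) :: real^'n^'n"
  define B' where "B' = (\<chi> j k. if k = one then (?A *v 1) $ j else ?A $ j $ k)"
  have is_root: "f j = root \<longleftrightarrow> j = r" for j
    using root_child by blast
  have "(?A *v 1) $ j = (if j = r then 1 else 0)" for j
  proof -
    have "(?A *v 1) $ j = (\<Sum>k\<in>UNIV. if k = j then 1 else 0) - (\<Sum>k\<in>UNIV. if f j = Some k then 1 else 0)"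
      unfolding sum_subtractf[symmetric]
      by (auto simp: matrix_vector_mult_def laplacian_edge_column_def intro: sum.cong)
    then show ?thesis
      using is_root[of j] by (cases "f j") (simp_all add: root_def)
  qed
  then have B': "B' $ j $ k = (if k = one then (if j = r then 1 else 0) else ?A $ j $ k)" for j k
    by (simp add: B'_def)
  \<comment> \<open>The all-ones vector turns column \<open>one\<close> into the row sums, which vanish off the root child.\<close>
  have "det B' = det ?A"
    unfolding B'_def using cramer_lemma[where A = ?A and k = one and x = 1] by simp
  moreover have "det ?B = det B'"
  proof (cases "r = one")
    case True
    have "?B $ j $ k = B' $ j $ k" for j k
      using True is_root[of j] by (cases "f j") (simp_all add: B' laplacian_edge_column_def
          root_laplacian_edge_column_def root_def)
    then have "?B = B'"
      by (simp add: vec_eq_iff)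
    then show ?thesis
      by simp
  next
    case False
    have "B' $ j $ k = (if j = r then row r ?B + axis r 1 else row j ?B) $ k" for j k
      using False is_root[of j] by (cases "f j") (simp_all add: B' row_def axis_def
          laplacian_edge_column_def root_laplacian_edge_column_def root_def)
    then have "B' = (\<chi> j. if j = r then row r ?B + axis r 1 else row j ?B)"
      by (simp add: vec_eq_iff)
    moreover have "column one (\<chi> j. if j = r then axis r 1 else row j ?B) = 0"
      using False is_root
      by (simp add: vec_eq_iff column_def row_def axis_def root_laplacian_edge_column_def)
    ultimately have "det B' = det (\<chi> j. if j = r then row r ?B else row j ?B)"
      by (simp add: det_row_add det_zero_column)
    also have "(\<chi> j. if j = r then row r ?B else row j ?B) = ?B"
      by (simp add: vec_eq_iff row_def)
    finally show ?thesis
      by simp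
  qed
  ultimately show ?thesis
    by simp
qed

lemma det_root_laplacian_edge_columns:
  fixes f :: "'n::finite \<Rightarrow> 'n node"
  shows "det (\<chi> j. root_laplacian_edge_column one (f j) j)
    = of_bool ((\<forall>j. reaches_root f j) \<and> card {j. f j = root} = 1)"
proof (cases "card {j. f j = root} = 1")
  case True
  then obtain r where "{j. f j = root} = {r}"
    by (rule card_1_singletonE)
  then show ?thesis
    using True by (simp add: det_root_laplacian_edge_columns_single_root det_laplacian_edge_columns)
next
  case several_or_none: False
  have "det (\<chi> j. root_laplacian_edge_column one (f j) j) = 0"
  proof (cases "\<exists>j. f j = root")
    case False
    then have "column one (\<chi> j. root_laplacian_edge_column one (f j) j) = 0"
      by (simp add: vec_eq_iff column_def root_laplacian_edge_column_def)
    then show ?thesis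
      by (rule det_zero_column(1))
  next
    case True
    then obtain j1 where "f j1 = root"
      by blast
    moreover obtain j2 where "f j2 = root" and "j1 \<noteq> j2"
    proof -
      have "{j. f j = root} \<noteq> {j1}"
        using several_or_none by auto
      then show ?thesis
        using that \<open>f j1 = root\<close> by blast
    qed
    ultimately have "row j1 (\<chi> j. root_laplacian_edge_column one (f j) j)
        = row j2 (\<chi> j. root_laplacian_edge_column one (f j) j)"
      by (simp add: vec_eq_iff row_def root_laplacian_edge_column_def)
    with \<open>j1 \<noteq> j2\<close> show ?thesis
      by (rule det_identical_rows)
  qed
  with several_or_none show ?thesis
    by simp
qed

definition edge_column :: "lap_case \<Rightarrow> 'n::finite \<Rightarrow> 'n node \<Rightarrow> 'n \<Rightarrow> real^'n" where
  "edge_column c one = (case c of AllTrees \<Rightarrow> laplacian_edge_column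
                                | SingleRooted \<Rightarrow> root_laplacian_edge_column one)"

lemma det_edge_columns:
  "det (\<chi> j. edge_column c one (f j) j) = of_bool (f \<in> tree_parents c)"
  by (cases c) (simp_all add: edge_column_def tree_parents_def det_laplacian_edge_columns
      det_root_laplacian_edge_columns)

lemma lap_eq_sum_edge_columns:
  "lap c one w $ i $ k = (\<Sum>a\<in>UNIV. w a (Some k) * edge_column c one a k $ i)"
proof -
  have sum_except: "(\<Sum>a\<in>UNIV - S. w a (Some k)) = (\<Sum>a\<in>UNIV. w a (Some k)) - (\<Sum>a\<in>S. w a (Some k))"
    for S by (simp add: sum_diff)
  have times_indicator: "x * (if P then 1 else 0) = (if P then x else 0)" for x :: real and P
    by simp
  show ?thesis
  proof (cases c)
    case AllTrees
    then show ?thesis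
      by (simp add: lap_def laplacian_def edge_column_def laplacian_edge_column_def sum_except
          right_diff_distrib sum_subtractf times_indicator)
  next
    case SingleRooted
    have "(\<Sum>a\<in>UNIV. if a \<noteq> root then w a (Some k) else 0) = (\<Sum>a\<in>UNIV - {root}. w a (Some k))"
      by (intro sum.mono_neutral_cong_right) auto
    with SingleRooted show ?thesis
      by (simp add: lap_def root_laplacian_def edge_column_def root_laplacian_edge_column_def
          sum_except right_diff_distrib sum_subtractf times_indicator root_def)
  qed
qed

lemma transpose_lap: "transpose (lap c one w) = (\<chi> k. \<Sum>a\<in>UNIV. w a (Some k) *s edge_column c one a k)"
  by (simp add: vec_eq_iff transpose_def lap_eq_sum_edge_columns)

theorem det_lap_eq_sum_tree_parents: "det (lap c one w) = (\<Sum>f\<in>tree_parents c. parent_weight w f)"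
proof -
  have "det (lap c one w) = det (\<chi> k. \<Sum>a\<in>UNIV. w a (Some k) *s edge_column c one a k)"
    by (simp only: transpose_lap[symmetric] det_transpose)
  also have "\<dots> = (\<Sum>f\<in>UNIV. det (\<chi> k. w (f k) (Some k) *s edge_column c one (f k) k))"
    by (rule det_rows_sum_expand)
  also have "\<dots> = (\<Sum>f\<in>UNIV. parent_weight w f * of_bool (f \<in> tree_parents c))"
    by (simp add: det_rows_mul det_edge_columns parent_weight_def)
  also have "\<dots> = (\<Sum>f\<in>tree_parents c. parent_weight w f)"
    by simp
  finally show ?thesis .
qed

lemma column_lap: "column k (lap c one w) = (\<Sum>a\<in>UNIV. w a (Some k) *s edge_column c one a k)"
  by (simp add: vec_eq_iff column_def lap_eq_sum_edge_columns mult.commute)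

lemma lap_deriv_eq:
  "lap_deriv c one w a (Some j) i k = (if k = j then edge_column c one a j $ i else 0)"
proof -
  let ?\<beta> = "if k = j then edge_column c one a j $ i else 0"
  have "lap c one (upd_w w a (Some j) x) $ i $ k = lap c one w $ i $ k + (x - w a (Some j)) * ?\<beta>" for x
  proof -
    have "upd_w w a (Some j) x b (Some k) = w b (Some k) + (if b = a \<and> k = j then x - w a (Some j) else 0)"
      for b by (simp add: upd_w_def)
    then show ?thesis
      by (simp add: lap_eq_sum_edge_columns distrib_right sum.distrib if_distrib[of "\<lambda>t. t * _"]
          cong: if_cong)
  qed
  then have "((\<lambda>x. lap c one (upd_w w a (Some j) x) $ i $ k) has_field_derivative ?\<beta>) (at (w a (Some j)))"
    by (auto intro!: derivative_eq_intros)
  then show ?thesis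
    unfolding lap_deriv_def by (rule DERIV_imp_deriv)
qed

section \<open>Scaling the weights of the edges into a node\<close>

definition scale_incoming ::
  "('n node \<Rightarrow> 'n node \<Rightarrow> real) \<Rightarrow> 'n \<Rightarrow> ('n node \<Rightarrow> real) \<Rightarrow> 'n node \<Rightarrow> 'n node \<Rightarrow> real" where
  "scale_incoming w j g = (\<lambda>a b. if b = Some j then g a * w a b else w a b)"

lemma parent_weight_scale_incoming:
  "parent_weight (scale_incoming w j g) f = g (f j) * parent_weight w f"
proof -
  have "scale_incoming w j g (f i) (Some i) = (if i = j then g (f j) else 1) * w (f i) (Some i)" for i
    by (simp add: scale_incoming_def)
  then show ?thesis
    by (simp add: parent_weight_def prod.distrib)
qed

lemma lap_scale_incoming_other_column:
  "k \<noteq> j \<Longrightarrow> lap c one (scale_incoming w j g) $ i $ k = lap c one w $ i $ k"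
  by (simp add: lap_eq_sum_edge_columns scale_incoming_def)

lemma det_lap_scale_incoming:
  "det (lap c one (scale_incoming w j g)) = (\<Sum>f\<in>tree_parents c. g (f j) * parent_weight w f)"
  by (simp add: det_lap_eq_sum_tree_parents parent_weight_scale_incoming)

lemma column_lap_scale_incoming:
  "column k (lap c one (scale_incoming w j g))
     = (\<Sum>a\<in>UNIV. (if k = j then g a * w a (Some k) else w a (Some k)) *s edge_column c one a k)"
  by (simp add: column_lap scale_incoming_def)

context
  fixes c :: lap_case and one :: "'n::finite" and w :: "'n node \<Rightarrow> 'n node \<Rightarrow> real"
    and M :: "real^'n^'n"
  assumes right_inverse: "lap c one w ** M = mat 1"
begin

lemma lap_mult_right_inverse: "lap c one w *v (M *v v) = v"
  by (simp add: matrix_vector_mul_assoc right_inverse)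

text \<open>Scaling the weights of the edges into \<open>j\<close> changes only column \<open>j\<close> of the Laplacian,
  so Cramer's rule applies.\<close>

lemma sum_tree_parents_scaled:
  "(\<Sum>f\<in>tree_parents c. g (f j) * parent_weight w f)
     = (M *v column j (lap c one (scale_incoming w j g))) $ j * det (lap c one w)"
proof -
  have "det (lap c one (scale_incoming w j g))
      = (M *v column j (lap c one (scale_incoming w j g))) $ j * det (lap c one w)"
    by (rule det_replace_column) (simp_all add: lap_scale_incoming_other_column lap_mult_right_inverse)
  then show ?thesis
    by (simp add: det_lap_scale_incoming)
qed

lemma sum_tree_parents_scaled_pair:
  fixes g h :: "'n node \<Rightarrow> real"
  assumes "j \<noteq> j'"
  defines "X \<equiv> M *v column j (lap c one (scale_incoming w j g))"
    and "Y \<equiv> M *v column j' (lap c one (scale_incoming w j' h))"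
  shows "(\<Sum>f\<in>tree_parents c. g (f j) * h (f j') * parent_weight w f)
     = (X $ j * Y $ j' - X $ j' * Y $ j) * det (lap c one w)"
proof -
  let ?w2 = "scale_incoming (scale_incoming w j g) j' h"
  have "(\<Sum>f\<in>tree_parents c. g (f j) * h (f j') * parent_weight w f) = det (lap c one ?w2)"
    by (simp add: det_lap_eq_sum_tree_parents parent_weight_scale_incoming mult_ac)
  also have "\<dots> = (X $ j * Y $ j' - X $ j' * Y $ j) * det (lap c one w)"
  proof (rule det_replace_two_columns[OF assms(1)])
    show "lap c one ?w2 $ i $ k = lap c one w $ i $ k" if "k \<noteq> j" "k \<noteq> j'" for i k
      using that by (simp add: lap_scale_incoming_other_column)
    show "lap c one w *v X = column j (lap c one ?w2)"
      using assms(1) by (simp add: X_def lap_mult_right_inverse column_lap_scale_incoming)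
        (simp add: scale_incoming_def)
    show "lap c one w *v Y = column j' (lap c one ?w2)"
      using assms(1) by (simp add: Y_def lap_mult_right_inverse column_lap_scale_incoming)
        (simp add: scale_incoming_def)
  qed
  finally show ?thesis .
qed

lemma sum_tree_parents_product:
  fixes g h :: "'n \<Rightarrow> 'n node \<Rightarrow> real"
  defines "X \<equiv> \<lambda>j. M *v column j (lap c one (scale_incoming w j (g j)))"
    and "Y \<equiv> \<lambda>j. M *v column j (lap c one (scale_incoming w j (h j)))"
    and "Z \<equiv> det (lap c one w)"
  shows "(\<Sum>f\<in>tree_parents c. parent_weight w f * ((\<Sum>j\<in>UNIV. g j (f j)) * (\<Sum>j\<in>UNIV. h j (f j))))
    = (\<Sum>f\<in>tree_parents c. parent_weight w f * (\<Sum>j\<in>UNIV. g j (f j) * h j (f j)))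
      + Z * (\<Sum>j\<in>UNIV. X j $ j) * (\<Sum>j\<in>UNIV. Y j $ j)
      - Z * (\<Sum>j'\<in>UNIV. \<Sum>l'\<in>UNIV. X l' $ j' * Y j' $ l')"
proof -
  let ?P = "tree_parents c"
  \<comment> \<open>The minor vanishes for \<open>j = j'\<close>, so it may be summed over all pairs of nodes.\<close>
  have pair: "(\<Sum>f\<in>?P. parent_weight w f * (g j (f j) * h j' (f j')))
      = (if j = j' then (\<Sum>f\<in>?P. parent_weight w f * (g j (f j) * h j (f j))) else 0)
        + Z * (X j $ j * Y j' $ j' - X j $ j' * Y j' $ j)" for j j'
  proof (cases "j = j'")
    case False
    then show ?thesis
      using sum_tree_parents_scaled_pair[OF False, of "g j" "h j'"]
      by (simp add: X_def Y_def Z_def mult_ac)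
  qed simp
  have "(\<Sum>f\<in>?P. parent_weight w f * ((\<Sum>j\<in>UNIV. g j (f j)) * (\<Sum>j\<in>UNIV. h j (f j))))
      = (\<Sum>f\<in>?P. \<Sum>j\<in>UNIV. \<Sum>j'\<in>UNIV. parent_weight w f * (g j (f j) * h j' (f j')))"
    unfolding sum_product by (simp add: sum_distrib_left)
  also have "\<dots> = (\<Sum>j\<in>UNIV. \<Sum>j'\<in>UNIV. \<Sum>f\<in>?P. parent_weight w f * (g j (f j) * h j' (f j')))"
    by (simp only: sum.swap[of _ ?P])
  also have "\<dots> = (\<Sum>j\<in>UNIV. \<Sum>j'\<in>UNIV. (if j = j' then (\<Sum>f\<in>?P. parent_weight w f * (g j (f j) * h j (f j))) else 0)
      + Z * (X j $ j * Y j' $ j' - X j $ j' * Y j' $ j))"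
    by (intro sum.cong refl pair)
  also have "\<dots> = (\<Sum>j\<in>UNIV. \<Sum>f\<in>?P. parent_weight w f * (g j (f j) * h j (f j)))
      + Z * ((\<Sum>j\<in>UNIV. X j $ j) * (\<Sum>j\<in>UNIV. Y j $ j))
      - Z * (\<Sum>j\<in>UNIV. \<Sum>j'\<in>UNIV. X j $ j' * Y j' $ j)"
    unfolding sum_product by (simp add: sum.distrib right_diff_distrib sum_subtractf sum_distrib_left)
  also have "(\<Sum>j\<in>UNIV. \<Sum>f\<in>?P. parent_weight w f * (g j (f j) * h j (f j)))
      = (\<Sum>f\<in>?P. parent_weight w f * (\<Sum>j\<in>UNIV. g j (f j) * h j (f j)))"
    by (simp add: sum_distrib_left sum.swap[of _ UNIV ?P])
  also have "(\<Sum>j\<in>UNIV. \<Sum>j'\<in>UNIV. X j $ j' * Y j' $ j) = (\<Sum>j'\<in>UNIV. \<Sum>l'\<in>UNIV. X l' $ j' * Y j' $ l')"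
    by (rule sum.swap)
  finally show ?thesis
    by (simp add: mult.assoc)
qed

lemma sum_trees_tree_sum:
  assumes "rooted_wdigraph E w"
  shows "(\<Sum>d\<in>trees c E. tree_weight w d * tree_sum g d)
    = det (lap c one w) * (\<Sum>j\<in>UNIV. (M *v column j (lap c one (scale_incoming w j (\<lambda>a. g a (Some j))))) $ j)"
proof -
  have "(\<Sum>d\<in>trees c E. tree_weight w d * tree_sum g d)
      = (\<Sum>f\<in>tree_parents c. parent_weight w f * (\<Sum>j\<in>UNIV. g (f j) (Some j)))"
    by (simp add: sum_trees_eq_sum_tree_parents[OF assms] tree_sum_parent_graph)
  also have "\<dots> = (\<Sum>j\<in>UNIV. \<Sum>f\<in>tree_parents c. g (f j) (Some j) * parent_weight w f)"
    by (subst sum.swap) (simp add: sum_distrib_left mult.commute)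
  also have "\<dots> = (\<Sum>j\<in>UNIV. (M *v column j (lap c one (scale_incoming w j (\<lambda>a. g a (Some j))))) $ j
      * det (lap c one w))"
    by (intro sum.cong refl sum_tree_parents_scaled)
  finally show ?thesis
    by (simp add: sum_distrib_left mult.commute)
qed

lemma sum_trees_tree_sum_product:
  fixes g h :: "'n node \<Rightarrow> 'n node \<Rightarrow> real"
  assumes G: "rooted_wdigraph E w"
  defines "X \<equiv> \<lambda>j. M *v column j (lap c one (scale_incoming w j (\<lambda>a. g a (Some j))))"
    and "Y \<equiv> \<lambda>j. M *v column j (lap c one (scale_incoming w j (\<lambda>a. h a (Some j))))"
  shows "(\<Sum>d\<in>trees c E. tree_weight w d * (tree_sum g d * tree_sum h d))
    = (\<Sum>(i, j)\<in>E. edge_bar (trees c E) w i j * (g i j * h i j))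
      + det (lap c one w) * (\<Sum>j\<in>UNIV. X j $ j) * (\<Sum>j\<in>UNIV. Y j $ j)
      - det (lap c one w) * (\<Sum>j'\<in>UNIV. \<Sum>l'\<in>UNIV. X l' $ j' * Y j' $ l')"
proof -
  have "\<forall>d\<in>trees c E. d \<subseteq> E"
    by (simp add: trees_def is_tree_def)
  then have "(\<Sum>(i, j)\<in>E. edge_bar (trees c E) w i j * (g i j * h i j))
      = (\<Sum>f\<in>tree_parents c. parent_weight w f * (\<Sum>j\<in>UNIV. g (f j) (Some j) * h (f j) (Some j)))"
    using sum_edge_bar[of E "trees c E" w "\<lambda>i j. g i j * h i j"]
    by (simp add: sum_trees_eq_sum_tree_parents[OF G] tree_sum_parent_graph)
  then show ?thesis
    using sum_tree_parents_product[of "\<lambda>j a. g a (Some j)" "\<lambda>j a. h a (Some j)"]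
    by (simp add: sum_trees_eq_sum_tree_parents[OF G] tree_sum_parent_graph X_def Y_def)
qed

end

lemma sum_edges_lap_deriv:
  assumes "rooted_wdigraph E w"
  shows "(\<Sum>(k, l)\<in>E. \<Sum>k'\<in>UNIV. M $ k' $ j' * lap_deriv c one w k l k' l' * w k l * g k l)
    = (column l' (lap c one (scale_incoming w l' (\<lambda>a. g a (Some l')))) v* M) $ j'"
proof -
  have "(\<Sum>(k, l)\<in>E. \<Sum>k'\<in>UNIV. M $ k' $ j' * lap_deriv c one w k l k' l' * w k l * g k l)
      = (\<Sum>a\<in>UNIV. \<Sum>l\<in>UNIV. \<Sum>k'\<in>UNIV. M $ k' $ j' * lap_deriv c one w a (Some l) k' l' * w a (Some l) * g a (Some l))"
    using assms by (rule sum_edges_eq_sum_nonroot_targets) simp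
  also have "\<dots> = (\<Sum>a\<in>UNIV. \<Sum>k'\<in>UNIV. M $ k' $ j' * edge_column c one a l' $ k' * w a (Some l') * g a (Some l'))"
    by (rule sum.cong[OF refl], subst sum.swap)
      (simp add: lap_deriv_eq if_distrib[of "\<lambda>t. _ * t"] if_distrib[of "\<lambda>t. t * _"] cong: if_cong)
  also have "\<dots> = (\<Sum>k'\<in>UNIV. \<Sum>a\<in>UNIV. M $ k' $ j' * (g a (Some l') * w a (Some l') * edge_column c one a l' $ k'))"
    by (subst sum.swap) (simp add: mult_ac)
  also have "\<dots> = (column l' (lap c one (scale_incoming w l' (\<lambda>a. g a (Some l')))) v* M) $ j'"
    by (simp add: vector_matrix_mult_def column_lap_scale_incoming sum_distrib_left mult.commute)
  finally show ?thesis .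
qed

section \<open>The covariance formula\<close>

text \<open>The entries of the matrix identity, for scalar edge values \<open>g\<close> and \<open>h\<close>.\<close>

theorem tree_sum_product_expansion:
  fixes E :: "('n::finite node \<times> 'n node) set" and g h :: "'n node \<Rightarrow> 'n node \<Rightarrow> real"
  assumes G: "rooted_wdigraph E w" and Z: "det (lap c one w) \<noteq> 0"
  defines "D \<equiv> trees c E" and "B \<equiv> matrix_inv (transpose (lap c one w))"
  shows "(\<Sum>d\<in>D. tree_weight w d * (tree_sum g d * tree_sum h d))
    = (\<Sum>(i, j)\<in>E. edge_bar D w i j * (g i j * h i j))
      + 1 / det (lap c one w) * ((\<Sum>d\<in>D. tree_weight w d * tree_sum g d) * (\<Sum>d\<in>D. tree_weight w d * tree_sum h d))
      - det (lap c one w) * (\<Sum>j'\<in>UNIV. \<Sum>l'\<in>UNIV.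
          (\<Sum>(k, l)\<in>E. \<Sum>k'\<in>UNIV. B $ k' $ j' * lap_deriv c one w k l k' l' * w k l * g k l)
        * (\<Sum>(i, j)\<in>E. \<Sum>i'\<in>UNIV. B $ i' $ l' * lap_deriv c one w i j i' j' * w i j * h i j))"
proof -
  let ?L = "lap c one w"
  have inv: "?L ** transpose B = mat 1"
  proof -
    have "B ** transpose ?L = mat 1"
      using Z by (simp add: B_def matrix_inv_left invertible_det_nz)
    then show ?thesis
      by (metis matrix_transpose_mul transpose_mat transpose_transpose)
  qed
  define X where "X q j = transpose B *v column j (lap c one (scale_incoming w j (\<lambda>a. q a (Some j))))"
    for q :: "'n node \<Rightarrow> 'n node \<Rightarrow> real" and j
  have rh: "(\<Sum>(k, l)\<in>E. \<Sum>k'\<in>UNIV. B $ k' $ j' * lap_deriv c one w k l k' l' * w k l * q k l) = X q l' $ j'"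
    for q j' l' using sum_edges_lap_deriv[OF G] by (simp add: X_def)
  show ?thesis
    using Z by (simp add: D_def sum_trees_tree_sum_product[OF inv G] sum_trees_tree_sum[OF inv G] rh X_def)
qed

theorem mainTheorem6:
  fixes E :: "('n::finite node \<times> 'n node) set"
    and w :: "'n node \<Rightarrow> 'n node \<Rightarrow> real"
    and c :: lap_case and one :: 'n
    and r :: "'n node \<Rightarrow> 'n node \<Rightarrow> real^'r"
    and s :: "'n node \<Rightarrow> 'n node \<Rightarrow> real^'s"
  assumes G: "rooted_wdigraph E w"
    and Zpos: "det (lap c one w) > 0"
  shows
   "(let L = lap c one w; Z = det L; D = trees c E; B = matrix_inv (transpose L);
         rh = (\<lambda>j' l'. \<Sum>(k,l)\<in>E. \<Sum>k'\<in>UNIV.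
                 (B $ k' $ j' * lap_deriv c one w k l k' l' * w k l) *\<^sub>R r k l);
         sh = (\<lambda>j' l'. \<Sum>(i,j)\<in>E. \<Sum>i'\<in>UNIV.
                 (B $ i' $ l' * lap_deriv c one w i j i' j' * w i j) *\<^sub>R s i j);
         tbar = (\<Sum>d\<in>D. tree_weight w d *\<^sub>R outer (tree_sum r d) (tree_sum s d));
         rbar = (\<Sum>d\<in>D. tree_weight w d *\<^sub>R tree_sum r d);
         sbar = (\<Sum>d\<in>D. tree_weight w d *\<^sub>R tree_sum s d);
         fbar = (\<Sum>(i,j)\<in>E. edge_bar D w i j *\<^sub>R outer (r i j) (s i j))
     in tbar = fbar + (1 / Z) *\<^sub>R outer rbar sbar
                - Z *\<^sub>R (\<Sum>j'\<in>UNIV. \<Sum>l'\<in>UNIV. outer (rh j' l') (sh j' l')))"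
proof -
  have Z: "det (lap c one w) \<noteq> 0"
    using Zpos by simp
  have tree_sum_component: "tree_sum q d $ \<alpha> = tree_sum (\<lambda>i j. q i j $ \<alpha>) d"
    for q :: "'n node \<Rightarrow> 'n node \<Rightarrow> real^'m" and d \<alpha>
    by (simp add: tree_sum_def case_prod_beta)
  show ?thesis
    unfolding Let_def vec_eq_iff
    using tree_sum_product_expansion[OF G Z]
    by (simp add: outer_def tree_sum_component case_prod_beta)
qed

end
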